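(* For all integers $n \geq 1$, $r \geq 1$, and $k \geq 0$, \[\binom{k+r-1}{r-1}\left((k+r)^n - (n+1)(k+r-1)^n\right) \leq E_r(n,k) \leq \binom{k+r-1}{r-1}(k+r)^n.\]
   Context: The $r$th order Eulerian number $E_r(n,k)$ is the number of pairs $(w, S)$ with $w$ a permutation of $\{1, \ldots, n\}$ and $S \subset \{1, \ldots, n-1\}$ of size $r-1$ such that exactly $k$ indices $i \in \{1,\ldots,n-1\} \setminus S$ satisfy $w(i) > w(i+1)$. *)

theory Defs
  imports "HOL-Combinatorics.Combinatorics"
begin

definition descents_outside :: "nat \<Rightarrow> (nat \<Rightarrow> nat) \<Rightarrow> nat set \<Rightarrow> nat set" where
  "descents_outside n w S = {i \<in> {1..n-1} - S. w i > w (i+1)}"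

definition eulerian_r :: "nat \<Rightarrow> nat \<Rightarrow> nat \<Rightarrow> nat" where
  "eulerian_r r n k = card {(w, S). w permutes {1..n} \<and> S \<subseteq> {1..n-1} \<and> card S = r - 1
                                 \<and> card (descents_outside n w S) = k}"

end

(*
  Write m = k + r. A set J of r - 1 colours in {1..m-1} and a colouring f of {1..n} with
  colours {0..<m} determine a pair (w, S): w lists {1..n} by increasing colour, entries of equal
  colour in increasing order, and S is the set of positions where the colour jumps to a colour
  in J. Every pair counted by E_r(n,k) arises this way: colour the entry at position i by the
  number of descents and bars before i. This gives the upper bound.

  Conversely (J, f) can be read off (w, S) unless some boundary c between the colours c - 1 and
  c is redundant: c is in J but one of the two colours is missing, or c is not in J and all
  entries of colour c - 1 are smaller than all entries of colour c. For fixed J, a colouring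
  with a redundant boundary is determined by the number of its entries of colour below the
  least redundant boundary c together with the colouring obtained by merging the colours c - 1
  and c, so there are at most (n + 1) (m - 1)^n such colourings; the remaining ones are
  recovered from their images, which gives the lower bound.
*)

theory Submission
  imports Defs "HOL-Library.Product_Lexorder"
begin

definition sorting_perm :: "nat \<Rightarrow> (nat \<Rightarrow> 'a::linorder) \<Rightarrow> nat \<Rightarrow> nat" where
  "sorting_perm n g i = (if i \<in> {1..n} then sort_key g [1..<Suc n] ! (i - 1) else i)"

lemma sorting_perm_permutes: "sorting_perm n g permutes {1..n}"
proof (rule bij_imp_permutes)
  let ?xs = "sort_key g [1..<Suc n]"
  have "bij_betw ((!) ?xs) {..<n} {1..n}"
    by (rule bij_betw_nth) (auto simp: atLeastLessThanSuc_atLeastAtMost)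
  moreover have "bij_betw (\<lambda>i. i - 1) {1..n} {..<n}"
    by (rule bij_betwI[where g = Suc]) auto
  ultimately have "bij_betw ((!) ?xs \<circ> (\<lambda>i. i - 1)) {1..n} {1..n}"
    by (rule bij_betw_trans[rotated])
  then show "bij_betw (sorting_perm n g) {1..n} {1..n}"
    by (rule bij_betw_cong[THEN iffD1, rotated]) (simp add: sorting_perm_def)
qed (auto simp: sorting_perm_def)

lemma sorting_perm_less:
  assumes "inj_on g {1..n}" "i \<in> {1..n}" "j \<in> {1..n}" "i < j"
  shows "g (sorting_perm n g i) < g (sorting_perm n g j)"
proof -
  let ?ys = "map g (sort_key g [1..<Suc n])"
  have "distinct ?ys"
    using assms(1) by (simp add: distinct_map atLeastLessThanSuc_atLeastAtMost del: upt_Suc)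
  then have "sorted_wrt (<) ?ys"
    by (simp add: strict_sorted_iff)
  from sorted_wrt_nth_less[OF this, of "i - 1" "j - 1"]
  have "?ys ! (i - 1) < ?ys ! (j - 1)"
    using assms(2-4) by auto
  then show ?thesis
    using assms(2,3) by (auto simp: sorting_perm_def simp del: upt_Suc)
qed

lemma sorting_perm_unique:
  assumes inj: "inj_on g {1..n}" and w: "w permutes {1..n}"
    and asc: "\<And>i. 1 \<le> i \<Longrightarrow> i < n \<Longrightarrow> g (w i) < g (w (Suc i))"
  shows "sorting_perm n g = w"
proof
  fix i
  let ?xs = "sort_key g [1..<Suc n]" and ?ys = "map w [1..<Suc n]"
  have set_ys: "set ?ys = {1..n}"
    using permutes_image[OF w] by (simp add: atLeastLessThanSuc_atLeastAtMost del: upt_Suc)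
  have "sorted_wrt (<) (map g ?ys)"
    by (subst sorted_wrt_iff_nth_Suc_transp) (auto simp: transp_def nth_append asc simp del: upt_Suc)
  moreover have "sorted_wrt (<) (map g ?xs)"
    using inj by (simp add: strict_sorted_iff distinct_map atLeastLessThanSuc_atLeastAtMost del: upt_Suc)
  moreover have "set (map g ?ys) = set (map g ?xs)"
    by (simp only: set_map[of g ?ys] set_ys) (simp add: atLeastLessThanSuc_atLeastAtMost del: upt_Suc)
  ultimately have "map g ?ys = map g ?xs"
    by (intro sorted_distinct_set_unique) (auto simp: strict_sorted_iff)
  then have "?ys = ?xs"
    using inj set_ys by (subst inj_on_map_eq_map[symmetric]) (auto simp: atLeastLessThanSuc_atLeastAtMost simp del: upt_Suc)
  then show "sorting_perm n g i = w i"
    using permutes_not_in[OF w, of i] by (auto simp: sorting_perm_def simp del: upt_Suc dest: sym)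
qed

text \<open>Pairs are ordered lexicographically, so entries of equal colour are sorted by value.\<close>

definition colour_sort :: "nat \<Rightarrow> (nat \<Rightarrow> nat) \<Rightarrow> nat \<Rightarrow> nat" where
  "colour_sort n f = sorting_perm n (\<lambda>u. (f u, u))"

lemma colour_sort_permutes: "colour_sort n f permutes {1..n}"
  unfolding colour_sort_def by (rule sorting_perm_permutes)

lemma colour_sort_le:
  assumes "i \<in> {1..n}" "j \<in> {1..n}" "i \<le> j"
  shows "(f (colour_sort n f i), colour_sort n f i) \<le> (f (colour_sort n f j), colour_sort n f j)"
proof (cases "i = j")
  case False
  have "inj_on (\<lambda>u. (f u, u)) {1..n}"
    by (rule inj_onI) simp
  then show ?thesis
    unfolding colour_sort_def using assms False by (intro less_imp_le sorting_perm_less) auto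
qed simp

lemma colour_sort_mono:
  "i \<in> {1..n} \<Longrightarrow> j \<in> {1..n} \<Longrightarrow> i \<le> j \<Longrightarrow> f (colour_sort n f i) \<le> f (colour_sort n f j)"
  using colour_sort_le[of i n j f] by auto

lemma colour_sort_mono_within_colour:
  "i \<in> {1..n} \<Longrightarrow> j \<in> {1..n} \<Longrightarrow> i \<le> j \<Longrightarrow> f (colour_sort n f i) = f (colour_sort n f j)
    \<Longrightarrow> colour_sort n f i \<le> colour_sort n f j"
  using colour_sort_le[of i n j f] by auto

lemma colour_sort_unique:
  assumes "w permutes {1..n}"
    and "\<And>i. 1 \<le> i \<Longrightarrow> i < n \<Longrightarrow> (f (w i), w i) < (f (w (Suc i)), w (Suc i))"
  shows "colour_sort n f = w"
  unfolding colour_sort_def using assms by (intro sorting_perm_unique) (auto intro: inj_onI)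

definition count_below :: "nat set \<Rightarrow> nat \<Rightarrow> nat" where
  "count_below C i = card {j \<in> C. j < i}"

definition jumps :: "nat \<Rightarrow> (nat \<Rightarrow> nat) \<Rightarrow> nat set" where
  "jumps n b = {i \<in> {1..n-1}. b i < b (Suc i)}"

definition descents :: "nat \<Rightarrow> (nat \<Rightarrow> nat) \<Rightarrow> nat set" where
  "descents n w = {i \<in> {1..n-1}. w (Suc i) < w i}"

lemma count_below_Suc:
  assumes "finite C"
  shows "count_below C (Suc i) = count_below C i + (if i \<in> C then 1 else 0)"
proof -
  have "{j \<in> C. j < Suc i} = (if i \<in> C then insert i {j \<in> C. j < i} else {j \<in> C. j < i})"
    by (auto simp: less_Suc_eq)
  then show ?thesis
    using assms by (simp add: count_below_def)
qed

lemma count_below_mono: "finite C \<Longrightarrow> i \<le> j \<Longrightarrow> count_below C i \<le> count_below C j"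
  unfolding count_below_def by (intro card_mono) auto

lemma count_below_le_card: "finite C \<Longrightarrow> count_below C i \<le> card C"
  unfolding count_below_def by (intro card_mono) auto

lemma count_below_eq_card:
  assumes "C \<subseteq> {..<i}"
  shows "count_below C i = card C"
proof -
  have "{j \<in> C. j < i} = C"
    using assms by auto
  then show ?thesis
    by (simp add: count_below_def)
qed

lemma bij_betw_count_below_Suc:
  assumes "finite C"
  shows "bij_betw (\<lambda>i. count_below C (Suc i)) C {1..card C}"
proof -
  have strict: "count_below C (Suc i) < count_below C (Suc j)" if "i < j" "j \<in> C" for i j
  proof -
    have "count_below C (Suc i) \<le> count_below C j"
      using assms that by (intro count_below_mono) auto
    also have "\<dots> < count_below C (Suc j)"
      using assms that by (simp add: count_below_Suc)
    finally show ?thesis .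
  qed
  have inj: "inj_on (\<lambda>i. count_below C (Suc i)) C"
    by (rule inj_onI) (metis linorder_neqE_nat less_irrefl strict)
  have "(\<lambda>i. count_below C (Suc i)) ` C = {1..card C}"
  proof (rule card_subset_eq)
    show "(\<lambda>i. count_below C (Suc i)) ` C \<subseteq> {1..card C}"
    proof (rule image_subsetI)
      fix i assume "i \<in> C"
      then show "count_below C (Suc i) \<in> {1..card C}"
        using count_below_Suc[OF assms, of i] count_below_le_card[OF assms, of "Suc i"] by simp
    qed
    show "card ((\<lambda>i. count_below C (Suc i)) ` C) = card {1..card C}"
      using card_image[OF inj] by simp
  qed simp
  with inj show ?thesis
    unfolding bij_betw_def ..
qed

lemma jumps_count_below: "C \<subseteq> {1..n-1} \<Longrightarrow> jumps n (count_below C) = C"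
  using finite_subset[of C "{1..n-1}"] by (auto simp: jumps_def count_below_Suc)

lemma unit_steps_eq_count_below_jumps:
  assumes "b 1 = 0" and "\<And>i. 1 \<le> i \<Longrightarrow> i < n \<Longrightarrow> b i \<le> b (Suc i) \<and> b (Suc i) \<le> Suc (b i)"
    and "i \<in> {1..n}"
  shows "b i = count_below (jumps n b) i"
  using assms(3)
proof (induction i)
  case (Suc i)
  have fin: "finite (jumps n b)"
    by (simp add: jumps_def)
  show ?case
  proof (cases "i = 0")
    case True
    then show ?thesis
      using assms(1) by (simp add: count_below_def jumps_def)
  next
    case False
    then have i: "1 \<le> i" "i < n"
      using Suc.prems by auto
    then have "i \<in> jumps n b \<longleftrightarrow> b i < b (Suc i)"
      by (auto simp: jumps_def)
    then show ?thesis
      using Suc.IH i assms(2)[OF i] by (auto simp: count_below_Suc[OF fin])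
  qed
qed simp

lemma mono_onto_eq_count_below_jumps:
  assumes "n \<ge> 1" and mono: "mono_on {1..n} b" and onto: "b ` {1..n} = {0..<m}"
    and "i \<in> {1..n}"
  shows "b i = count_below (jumps n b) i"
proof (rule unit_steps_eq_count_below_jumps)
  have attained: "\<exists>p\<in>{1..n}. b p = c" if "c < m" for c
  proof -
    have "c \<in> b ` {1..n}"
      using that onto by simp
    then show ?thesis
      by auto
  qed
  have "b 1 < m"
    using onto assms(1) by auto
  then obtain p where p: "p \<in> {1..n}" "b p = 0"
    using attained[of 0] by auto
  show "b 1 = 0"
    using mono_onD[OF mono, of 1 p] p assms(1) by auto
  fix i assume i: "1 \<le> i" "i < n"
  have "b (Suc i) \<le> Suc (b i)"
  proof (rule ccontr)
    assume gap: "\<not> b (Suc i) \<le> Suc (b i)"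
    moreover have "b (Suc i) < m"
      using onto i by auto
    ultimately obtain q where q: "q \<in> {1..n}" "b q = Suc (b i)"
      using attained[of "Suc (b i)"] by auto
    then show False
      using mono_onD[OF mono, of q i] mono_onD[OF mono, of "Suc i" q] i gap
      by (cases "q \<le> i") auto
  qed
  moreover have "b i \<le> b (Suc i)"
    using mono_onD[OF mono, of i "Suc i"] i by auto
  ultimately show "b i \<le> b (Suc i) \<and> b (Suc i) \<le> Suc (b i)"
    by simp
qed (use assms in auto)

lemma jumps_cong: "(\<And>i. i \<in> {1..n} \<Longrightarrow> b i = b' i) \<Longrightarrow> jumps n b = jumps n b'"
  by (auto simp: jumps_def)

lemma descents_colour_sort_subset_jumps:
  "descents n (colour_sort n f) \<subseteq> jumps n (f \<circ> colour_sort n f)"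
proof
  fix i assume "i \<in> descents n (colour_sort n f)"
  then have i: "i \<in> {1..n}" "Suc i \<in> {1..n}" "colour_sort n f (Suc i) < colour_sort n f i"
    and "i \<in> {1..n-1}"
    by (auto simp: descents_def)
  then have "f (colour_sort n f i) \<noteq> f (colour_sort n f (Suc i))"
    using colour_sort_mono_within_colour[of i n "Suc i" f] by auto
  then show "i \<in> jumps n (f \<circ> colour_sort n f)"
    using colour_sort_mono[of i n "Suc i" f] i \<open>i \<in> {1..n-1}\<close> by (auto simp: jumps_def)
qed

lemma image_colour_sort: "(f \<circ> colour_sort n f) ` {1..n} = f ` {1..n}"
  by (simp only: image_comp[symmetric] permutes_image[OF colour_sort_permutes])

definition block_colouring :: "nat \<Rightarrow> (nat \<Rightarrow> nat) \<Rightarrow> nat set \<Rightarrow> nat \<Rightarrow> nat" where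
  "block_colouring n w C = restrict (\<lambda>u. count_below C (inv w u)) {1..n}"

lemma block_colouring_apply:
  assumes "w permutes {1..n}" "i \<in> {1..n}"
  shows "block_colouring n w C (w i) = count_below C i"
  using assms permutes_in_image[OF assms(1)] permutes_inverses(2)[OF assms(1)]
  by (simp add: block_colouring_def)

lemma block_colouring_eqI:
  assumes w: "w permutes {1..n}" and "f \<in> extensional {1..n}"
    and f: "\<And>i. i \<in> {1..n} \<Longrightarrow> f (w i) = count_below C i"
  shows "block_colouring n w C = f"
proof -
  have "block_colouring n w C = restrict f {1..n}"
    unfolding block_colouring_def
    using f permutes_inverses(1)[OF w] permutes_in_image[OF permutes_inv[OF w]]
    by (intro restrict_ext) metis
  also have "\<dots> = f"
    using assms(2) by (rule extensional_restrict)
  finally show ?thesis .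
qed

lemma jumps_block_colouring:
  assumes "w permutes {1..n}" "C \<subseteq> {1..n-1}"
  shows "jumps n (block_colouring n w C \<circ> w) = C"
proof -
  have "jumps n (block_colouring n w C \<circ> w) = jumps n (count_below C)"
    using block_colouring_apply[OF assms(1)] by (intro jumps_cong) simp
  then show ?thesis
    using jumps_count_below[OF assms(2)] by simp
qed

lemma colour_sort_block_colouring:
  assumes w: "w permutes {1..n}" and C: "finite C" "descents n w \<subseteq> C"
  shows "colour_sort n (block_colouring n w C) = w"
proof (rule colour_sort_unique[OF w])
  fix i assume i: "1 \<le> i" "i < n"
  let ?f = "block_colouring n w C"
  have f: "?f (w i) = count_below C i" "?f (w (Suc i)) = count_below C (Suc i)"
    using i block_colouring_apply[OF w] by simp_all
  show "(?f (w i), w i) < (?f (w (Suc i)), w (Suc i))"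
  proof (cases "i \<in> C")
    case False
    then have "w i \<le> w (Suc i)"
      using i C(2) by (auto simp: descents_def)
    moreover have "w i \<noteq> w (Suc i)"
      using injD[OF permutes_inj[OF w], of i "Suc i"] by auto
    ultimately show ?thesis
      using False f count_below_Suc[OF C(1), of i] by simp
  qed (use f count_below_Suc[OF C(1), of i] in simp)
qed

definition colourings :: "nat \<Rightarrow> nat \<Rightarrow> (nat \<Rightarrow> nat) set" where
  "colourings n m = {1..n} \<rightarrow>\<^sub>E {0..<m}"

definition marker_sets :: "nat \<Rightarrow> nat \<Rightarrow> nat set set" where
  "marker_sets m r = {J. J \<subseteq> {1..m-1} \<and> card J = r - 1}"

definition eulerian_pairs :: "nat \<Rightarrow> nat \<Rightarrow> nat \<Rightarrow> ((nat \<Rightarrow> nat) \<times> nat set) set" where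
  "eulerian_pairs n r k = {(w, S). w permutes {1..n} \<and> S \<subseteq> {1..n-1} \<and> card S = r - 1
                                   \<and> card (descents_outside n w S) = k}"

lemma eulerian_r_eq_card: "eulerian_r r n k = card (eulerian_pairs n r k)"
  by (simp add: eulerian_r_def eulerian_pairs_def)

lemma descents_outside_eq: "descents_outside n w S = descents n w - S"
  by (auto simp: descents_outside_def descents_def)

lemma finite_colourings: "finite (colourings n m)"
  by (simp add: colourings_def finite_PiE)

lemma card_colourings: "card (colourings n m) = m ^ n"
  by (simp add: colourings_def card_PiE)

lemma finite_marker_sets: "finite (marker_sets m r)"
  unfolding marker_sets_def by (rule finite_subset[of _ "Pow {1..m-1}"]) auto

lemma card_marker_sets: "card (marker_sets m r) = (m - 1) choose (r - 1)"
  unfolding marker_sets_def using n_subsets[of "{1..m-1}" "r - 1"] by simp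

lemma finite_eulerian_pairs: "finite (eulerian_pairs n r k)"
proof (rule finite_subset)
  show "eulerian_pairs n r k \<subseteq> {w. w permutes {1..n}} \<times> Pow {1..n-1}"
    by (auto simp: eulerian_pairs_def)
  show "finite ({w. w permutes {1..n}} \<times> Pow {1..n-1})"
    using finite_permutations[of "{1..n}"] by simp
qed

definition pair_of_colouring :: "nat \<Rightarrow> nat set \<times> (nat \<Rightarrow> nat) \<Rightarrow> (nat \<Rightarrow> nat) \<times> nat set" where
  "pair_of_colouring n = (\<lambda>(J, f). let w = colour_sort n f in
     (w, {i \<in> jumps n (f \<circ> w). f (w (Suc i)) \<in> J}))"

definition colouring_of_pair :: "nat \<Rightarrow> (nat \<Rightarrow> nat) \<times> nat set \<Rightarrow> nat set \<times> (nat \<Rightarrow> nat)" where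
  "colouring_of_pair n = (\<lambda>(w, S). let C = descents n w \<union> S in
     ((\<lambda>i. count_below C (Suc i)) ` S, block_colouring n w C))"

lemma colouring_of_pair_right_inverse:
  assumes "(w, S) \<in> eulerian_pairs n r k" and "r \<ge> 1"
  shows "colouring_of_pair n (w, S) \<in> marker_sets (k + r) r \<times> colourings n (k + r)"
    and "pair_of_colouring n (colouring_of_pair n (w, S)) = (w, S)"
proof -
  have w: "w permutes {1..n}" and S: "S \<subseteq> {1..n-1}" "card S = r - 1"
    and k: "card (descents n w - S) = k"
    using assms(1) by (auto simp: eulerian_pairs_def descents_outside_eq)
  define C where "C = descents n w \<union> S"
  define f where "f = block_colouring n w C"
  define J where "J = (\<lambda>i. count_below C (Suc i)) ` S"
  have C: "C \<subseteq> {1..n-1}" "finite C" "S \<subseteq> C" "descents n w \<subseteq> C"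
    using S by (auto simp: C_def descents_def intro: finite_subset)
  have "C = (descents n w - S) \<union> S" and "finite (descents n w - S)" "finite S"
    using C by (auto simp: C_def intro: finite_subset)
  then have "card C = card (descents n w - S) + card S"
    by (metis Diff_disjoint card_Un_disjoint inf_commute)
  then have card_C: "card C = k + r - 1"
    using k S(2) assms(2) by simp
  have bij: "bij_betw (\<lambda>i. count_below C (Suc i)) C {1..k + r - 1}"
    using bij_betw_count_below_Suc[OF C(2)] card_C by simp
  have pair: "colouring_of_pair n (w, S) = (J, f)"
    unfolding colouring_of_pair_def J_def f_def C_def by (simp add: Let_def)
  have "f (w (Suc i)) \<in> J \<longleftrightarrow> i \<in> S" if "i \<in> C" for i
  proof -
    have "f (w (Suc i)) = count_below C (Suc i)"
      using subsetD[OF C(1) that] block_colouring_apply[OF w, of "Suc i"] unfolding f_def by auto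
    then show ?thesis
      unfolding J_def using inj_on_image_mem_iff[OF bij_betw_imp_inj_on[OF bij] that C(3)] by simp
  qed
  then have "{i \<in> jumps n (f \<circ> w). f (w (Suc i)) \<in> J} = S"
    using C(3) jumps_block_colouring[OF w C(1)] unfolding f_def by auto
  then show "pair_of_colouring n (colouring_of_pair n (w, S)) = (w, S)"
    unfolding pair pair_of_colouring_def f_def by (simp add: colour_sort_block_colouring[OF w C(2,4)])
  have "J \<in> marker_sets (k + r) r"
    using bij_betw_imp_surj_on[OF bij] card_image[OF inj_on_subset[OF bij_betw_imp_inj_on[OF bij] C(3)]]
      C(3) S(2) by (auto simp: marker_sets_def J_def)
  moreover have "count_below C i < k + r" for i
    using count_below_le_card[OF C(2), of i] card_C assms(2) by linarith
  then have "f \<in> colourings n (k + r)"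
    by (auto simp: colourings_def f_def block_colouring_def)
  ultimately show "colouring_of_pair n (w, S) \<in> marker_sets (k + r) r \<times> colourings n (k + r)"
    unfolding pair by simp
qed

definition redundant_boundary :: "nat \<Rightarrow> (nat \<Rightarrow> nat) \<Rightarrow> nat set \<Rightarrow> nat \<Rightarrow> bool" where
  "redundant_boundary n f J c \<longleftrightarrow>
     (if c \<in> J then (\<forall>u\<in>{1..n}. f u \<noteq> c - 1) \<or> (\<forall>u\<in>{1..n}. f u \<noteq> c)
      else (\<forall>u\<in>{1..n}. \<forall>u'\<in>{1..n}. f u = c - 1 \<longrightarrow> f u' = c \<longrightarrow> u < u'))"

definition redundant_colourings :: "nat \<Rightarrow> nat \<Rightarrow> nat set \<Rightarrow> (nat \<Rightarrow> nat) set" where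
  "redundant_colourings n m J = {f \<in> colourings n m. \<exists>c\<in>{1..m-1}. redundant_boundary n f J c}"

lemma not_redundant_boundary_attains:
  "\<not> redundant_boundary n f J c \<Longrightarrow> (\<exists>u\<in>{1..n}. f u = c - 1) \<and> (\<exists>u\<in>{1..n}. f u = c)"
  unfolding redundant_boundary_def by (auto split: if_splits)

lemma nonredundant_colouring_onto:
  assumes "n \<ge> 1" and f: "f \<in> colourings n m - redundant_colourings n m J"
  shows "f ` {1..n} = {0..<m}"
proof
  show "f ` {1..n} \<subseteq> {0..<m}"
    using f by (auto simp: colourings_def)
  show "{0..<m} \<subseteq> f ` {1..n}"
  proof
    fix c assume c: "c \<in> {0..<m}"
    have nonred: "\<not> redundant_boundary n f J c'" if "c' \<in> {1..m-1}" for c'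
      using f that by (auto simp: redundant_colourings_def)
    consider "c \<ge> 1" | "c = 0" "m \<ge> 2" | "c = 0" "m = 1"
      using c by force
    then show "c \<in> f ` {1..n}"
    proof cases
      case 1
      then show ?thesis
        using not_redundant_boundary_attains[OF nonred[of c]] c by force
    next
      case 2
      then show ?thesis
        using not_redundant_boundary_attains[OF nonred[of 1]] by force
    next
      case 3
      then have "f 1 = c"
        using f assms(1) by (auto simp: colourings_def)
      then show ?thesis
        using assms(1) by force
    qed
  qed
qed

lemma nonredundant_eq_count_below_jumps:
  assumes "n \<ge> 1" and f: "f \<in> colourings n m - redundant_colourings n m J"
  defines "w \<equiv> colour_sort n f"
  shows "\<And>i. i \<in> {1..n} \<Longrightarrow> f (w i) = count_below (jumps n (f \<circ> w)) i"
    and "card (jumps n (f \<circ> w)) = m - 1"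
proof -
  have mono: "mono_on {1..n} (f \<circ> w)"
    unfolding w_def by (auto intro!: mono_onI colour_sort_mono)
  have onto: "(f \<circ> w) ` {1..n} = {0..<m}"
    unfolding w_def image_colour_sort using nonredundant_colouring_onto[OF assms(1) f] .
  show count: "f (w i) = count_below (jumps n (f \<circ> w)) i" if "i \<in> {1..n}" for i
    using mono_onto_eq_count_below_jumps[OF assms(1) mono onto that] by simp
  have "(f \<circ> w) 1 \<in> {0..<m}"
    using assms(1) unfolding onto[symmetric] by (intro imageI) simp
  then have "m - 1 \<in> (f \<circ> w) ` {1..n}"
    unfolding onto by simp
  then obtain p where p: "p \<in> {1..n}" "f (w p) = m - 1"
    by auto
  have "f (w n) < m"
    using assms(1) onto by auto
  moreover have "f (w p) \<le> f (w n)"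
    using mono_onD[OF mono, of p n] p(1) by simp
  moreover have "jumps n (f \<circ> w) \<subseteq> {..<n}"
    by (auto simp: jumps_def)
  then have "f (w n) = card (jumps n (f \<circ> w))"
    using count[of n] assms(1) count_below_eq_card by simp
  ultimately show "card (jumps n (f \<circ> w)) = m - 1"
    using p(2) by simp
qed

lemma colour_sort_jump_extremal:
  assumes i: "i \<in> jumps n (f \<circ> colour_sort n f)" and u: "u \<in> {1..n}"
  shows "f u = f (colour_sort n f i) \<Longrightarrow> u \<le> colour_sort n f i"
    and "f u = f (colour_sort n f (Suc i)) \<Longrightarrow> colour_sort n f (Suc i) \<le> u"
proof -
  let ?w = "colour_sort n f"
  have i1: "i \<in> {1..n}" "Suc i \<in> {1..n}" "f (?w i) < f (?w (Suc i))"
    using i by (auto simp: jumps_def)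
  have "u \<in> ?w ` {1..n}"
    using u permutes_image[OF colour_sort_permutes] by simp
  then obtain p where p: "p \<in> {1..n}" "u = ?w p"
    by (auto elim!: imageE)
  show "u \<le> ?w i" if "f u = f (?w i)"
  proof -
    have "p \<le> i"
      using colour_sort_mono[of "Suc i" n p f] p i1 that by (cases "p \<le> i") auto
    then show ?thesis
      using colour_sort_mono_within_colour[of p n i f] p i1(1) that by simp
  qed
  show "?w (Suc i) \<le> u" if "f u = f (?w (Suc i))"
  proof -
    have "Suc i \<le> p"
      using colour_sort_mono[of p n i f] p i1 that by (cases "Suc i \<le> p") auto
    then show ?thesis
      using colour_sort_mono_within_colour[of "Suc i" n p f] p i1(2) that by simp
  qed
qed

lemma unmarked_jump_is_descent:
  assumes "n \<ge> 1" and f: "f \<in> colourings n m - redundant_colourings n m J"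
  defines "w \<equiv> colour_sort n f"
  assumes i: "i \<in> jumps n (f \<circ> w)" and unmarked: "f (w (Suc i)) \<notin> J"
  shows "i \<in> descents n w"
proof -
  have w: "w permutes {1..n}"
    unfolding w_def by (rule colour_sort_permutes)
  define c where "c = f (w (Suc i))"
  have i1: "i \<in> {1..n}" "Suc i \<in> {1..n}" "i \<in> {1..n-1}"
    using i by (auto simp: jumps_def)
  have "c \<in> f ` {1..n}"
    using i1(2) permutes_in_image[OF w] unfolding c_def by auto
  moreover have "c = Suc (f (w i))"
  proof -
    have fin: "finite (jumps n (f \<circ> w))"
      by (simp add: jumps_def)
    have count: "f (w j) = count_below (jumps n (f \<circ> w)) j" if "j \<in> {1..n}" for j
      using nonredundant_eq_count_below_jumps(1)[OF assms(1) f that] unfolding w_def .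
    show ?thesis
      unfolding c_def count[OF i1(1)] count[OF i1(2)] count_below_Suc[OF fin] using i by simp
  qed
  ultimately have c: "c \<in> {1..m-1}" "f (w i) = c - 1"
    using nonredundant_colouring_onto[OF assms(1) f] by auto
  then have "\<not> redundant_boundary n f J c"
    using f by (auto simp: redundant_colourings_def)
  moreover have "c \<notin> J"
    using unmarked unfolding c_def .
  ultimately obtain u u' where uu: "u \<in> {1..n}" "u' \<in> {1..n}" "f u = c - 1" "f u' = c" "u' \<le> u"
    unfolding redundant_boundary_def by (auto simp: not_less)
  have "u \<le> w i" "w (Suc i) \<le> u'"
    using colour_sort_jump_extremal[of i n f] i uu c(2) unfolding w_def c_def by simp_all
  moreover have "w (Suc i) \<noteq> w i"
    using injD[OF permutes_inj[OF w], of "Suc i" i] by auto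
  ultimately show ?thesis
    using uu(5) i1(3) by (auto simp: descents_def)
qed

lemma jumps_nonredundant:
  assumes "n \<ge> 1" and "f \<in> colourings n m - redundant_colourings n m J"
  defines "w \<equiv> colour_sort n f"
  shows "jumps n (f \<circ> w) = descents n w \<union> {i \<in> jumps n (f \<circ> w). f (w (Suc i)) \<in> J}"
  using descents_colour_sort_subset_jumps[of n f] unmarked_jump_is_descent[OF assms(1,2)]
  unfolding w_def by blast

lemma colouring_of_pair_left_inverse:
  assumes "n \<ge> 1" "r \<ge> 1" and J: "J \<in> marker_sets (k + r) r"
    and f: "f \<in> colourings n (k + r) - redundant_colourings n (k + r) J"
  shows "pair_of_colouring n (J, f) \<in> eulerian_pairs n r k"
    and "colouring_of_pair n (pair_of_colouring n (J, f)) = (J, f)"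
proof -
  define w where "w = colour_sort n f"
  define C where "C = jumps n (f \<circ> w)"
  define S where "S = {i \<in> C. f (w (Suc i)) \<in> J}"
  have w: "w permutes {1..n}"
    unfolding w_def by (rule colour_sort_permutes)
  have C: "C \<subseteq> {1..n-1}" "finite C" "S \<subseteq> C"
    by (auto simp: C_def S_def jumps_def)
  have C_eq: "C = descents n w \<union> S"
    using jumps_nonredundant[OF assms(1) f] unfolding C_def S_def w_def .
  have fw: "f (w i) = count_below C i" if "i \<in> {1..n}" for i
    using nonredundant_eq_count_below_jumps(1)[OF assms(1) f that] unfolding C_def w_def .
  have bij: "bij_betw (\<lambda>i. count_below C (Suc i)) C {1..k + r - 1}"
    using bij_betw_count_below_Suc[OF C(2)] nonredundant_eq_count_below_jumps(2)[OF assms(1) f]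
    unfolding C_def w_def by simp
  have J_sub: "J \<subseteq> {1..k + r - 1}" and card_J: "card J = r - 1"
    using J by (auto simp: marker_sets_def)
  have "S = {i \<in> C. count_below C (Suc i) \<in> J}"
    using fw subsetD[OF C(1)] by (force simp: S_def)
  then have "(\<lambda>i. count_below C (Suc i)) ` S = (\<lambda>i. count_below C (Suc i)) ` C \<inter> J"
    by auto
  then have img_S: "(\<lambda>i. count_below C (Suc i)) ` S = J"
    using bij_betw_imp_surj_on[OF bij] J_sub by auto
  have card_S: "card S = r - 1"
    using card_image[OF inj_on_subset[OF bij_betw_imp_inj_on[OF bij] C(3)]] img_S card_J by simp
  have "card (descents n w - S) = card C - card S"
    using C(2,3) by (simp add: C_eq card_Diff_subset[symmetric] finite_subset Un_Diff)
  also have "\<dots> = k"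
    using bij_betw_same_card[OF bij] card_S assms(2) by simp
  finally have "(w, S) \<in> eulerian_pairs n r k"
    using w C card_S by (auto simp: eulerian_pairs_def descents_outside_eq)
  moreover have pair: "pair_of_colouring n (J, f) = (w, S)"
    by (simp add: pair_of_colouring_def Let_def w_def C_def S_def)
  ultimately show "pair_of_colouring n (J, f) \<in> eulerian_pairs n r k"
    by simp
  have "block_colouring n w C = f"
    using w fw f by (intro block_colouring_eqI) (auto simp: colourings_def PiE_iff)
  then show "colouring_of_pair n (pair_of_colouring n (J, f)) = (J, f)"
    using img_S by (simp add: pair colouring_of_pair_def C_eq[symmetric])
qed

lemma redundant_boundary_less:
  "redundant_boundary n f J c \<Longrightarrow> u \<in> {1..n} \<Longrightarrow> u' \<in> {1..n} \<Longrightarrow> f u = c - 1 \<Longrightarrow> f u' = c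
    \<Longrightarrow> u < u'"
  unfolding redundant_boundary_def by (auto split: if_splits)

definition merge_at :: "nat \<Rightarrow> (nat \<Rightarrow> nat) \<Rightarrow> nat \<Rightarrow> nat" where
  "merge_at c f u = (if f u < c then f u else f u - 1)"

lemma merge_at_less_count:
  assumes "c < c'" and "u\<^sub>0 \<in> {1..n}" "f' u\<^sub>0 = c' - 1"
    and merge: "\<And>u. u \<in> {1..n} \<Longrightarrow> merge_at c f u = merge_at c' f' u"
  shows "card {u \<in> {1..n}. f u < c} < card {u \<in> {1..n}. f' u < c'}"
proof -
  have "{u \<in> {1..n}. f u < c} \<subseteq> {u \<in> {1..n}. f' u < c' - 1}"
  proof
    fix u assume u: "u \<in> {u \<in> {1..n}. f u < c}"
    then have "merge_at c' f' u = f u"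
      using merge[of u] by (simp add: merge_at_def)
    then have "f' u < c' - 1"
      using u assms(1) by (auto simp: merge_at_def split: if_splits)
    then show "u \<in> {u \<in> {1..n}. f' u < c' - 1}"
      using u by simp
  qed
  also have "\<dots> \<subset> {u \<in> {1..n}. f' u < c'}"
  proof -
    have "u\<^sub>0 \<in> {u \<in> {1..n}. f' u < c'}" "u\<^sub>0 \<notin> {u \<in> {1..n}. f' u < c' - 1}"
      using assms(1-3) by auto
    moreover have "{u \<in> {1..n}. f' u < c' - 1} \<subseteq> {u \<in> {1..n}. f' u < c'}"
      by auto
    ultimately show ?thesis
      by blast
  qed
  finally show ?thesis
    by (rule psubset_card_mono[rotated]) simp
qed

text \<open>Equal counts below \<open>c\<close> force a second entry to cross the boundary in the opposite
  direction; redundancy of \<open>c\<close> then orders the two crossing entries both ways.\<close>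

lemma merge_at_redundant_no_crossing:
  assumes "c \<ge> 1" and red: "redundant_boundary n f J c" "redundant_boundary n f' J c"
    and merge: "\<And>u. u \<in> {1..n} \<Longrightarrow> merge_at c f u = merge_at c f' u"
    and count: "card {u \<in> {1..n}. f u < c} = card {u \<in> {1..n}. f' u < c}"
    and u: "u \<in> {1..n}" "f u = c - 1"
  shows "f' u \<noteq> c"
proof
  assume "f' u = c"
  then have mem: "u \<in> {u \<in> {1..n}. f u < c}" "u \<notin> {u \<in> {1..n}. f' u < c}"
    using u \<open>c \<ge> 1\<close> by auto
  have "\<not> {u \<in> {1..n}. f' u < c} \<subseteq> {u \<in> {1..n}. f u < c}"
  proof
    assume "{u \<in> {1..n}. f' u < c} \<subseteq> {u \<in> {1..n}. f u < c}"
    from card_subset_eq[OF _ this count[symmetric]]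
    have "{u \<in> {1..n}. f' u < c} = {u \<in> {1..n}. f u < c}"
      by simp
    then show False
      using mem by simp
  qed
  then obtain u' where u': "u' \<in> {1..n}" "f' u' < c" "\<not> f u' < c"
    by blast
  then have "f u' = c" "f' u' = c - 1"
    using merge[OF u'(1)] by (auto simp: merge_at_def split: if_splits)
  then show False
    using redundant_boundary_less[OF red(1) u(1) u'(1) u(2)] redundant_boundary_less[OF red(2) u'(1) u(1)]
      \<open>f' u = c\<close> by simp
qed

lemma merge_at_redundant_eq:
  assumes "c \<ge> 1" and red: "redundant_boundary n f J c" "redundant_boundary n f' J c"
    and merge: "\<And>u. u \<in> {1..n} \<Longrightarrow> merge_at c f u = merge_at c f' u"
    and count: "card {u \<in> {1..n}. f u < c} = card {u \<in> {1..n}. f' u < c}"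
    and u: "u \<in> {1..n}"
  shows "f u = f' u"
proof (rule ccontr)
  assume "f u \<noteq> f' u"
  then consider "f u = c - 1" "f' u = c" | "f' u = c - 1" "f u = c"
    using merge[OF u] assms(1) by (auto simp: merge_at_def split: if_splits)
  then show False
  proof cases
    case 1
    then show False
      using merge_at_redundant_no_crossing[OF assms(1) red merge count u] by simp
  next
    case 2
    then show False
      using merge_at_redundant_no_crossing[OF assms(1) red(2,1) merge[symmetric] count[symmetric] u]
      by simp
  qed
qed

definition least_redundant_boundary :: "nat \<Rightarrow> nat \<Rightarrow> nat set \<Rightarrow> (nat \<Rightarrow> nat) \<Rightarrow> nat" where
  "least_redundant_boundary n m J f = (LEAST c. c \<in> {1..m-1} \<and> redundant_boundary n f J c)"

lemma least_redundant_boundary: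
  assumes "f \<in> redundant_colourings n m J"
  shows "least_redundant_boundary n m J f \<in> {1..m-1}"
    and "redundant_boundary n f J (least_redundant_boundary n m J f)"
    and "\<And>c. c \<in> {1..m-1} \<Longrightarrow> c < least_redundant_boundary n m J f \<Longrightarrow> \<not> redundant_boundary n f J c"
proof -
  from assms obtain c where "c \<in> {1..m-1} \<and> redundant_boundary n f J c"
    unfolding redundant_colourings_def by blast
  then have "least_redundant_boundary n m J f \<in> {1..m-1} \<and>
      redundant_boundary n f J (least_redundant_boundary n m J f)"
    unfolding least_redundant_boundary_def by (rule LeastI)
  then show "least_redundant_boundary n m J f \<in> {1..m-1}"
    and "redundant_boundary n f J (least_redundant_boundary n m J f)"
    by auto
  show "\<not> redundant_boundary n f J c" if "c \<in> {1..m-1}" "c < least_redundant_boundary n m J f" for c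
    using that not_less_Least unfolding least_redundant_boundary_def by blast
qed

definition merge_code :: "nat \<Rightarrow> nat \<Rightarrow> nat set \<Rightarrow> (nat \<Rightarrow> nat) \<Rightarrow> nat \<times> (nat \<Rightarrow> nat)" where
  "merge_code n m J f = (let c = least_redundant_boundary n m J f in
     (card {u \<in> {1..n}. f u < c}, restrict (merge_at c f) {1..n}))"

lemma merge_code_eqD:
  assumes "merge_code n m J f = merge_code n m J f'"
  defines "c \<equiv> least_redundant_boundary n m J f" and "c' \<equiv> least_redundant_boundary n m J f'"
  shows "card {u \<in> {1..n}. f u < c} = card {u \<in> {1..n}. f' u < c'}"
    and "\<And>u. u \<in> {1..n} \<Longrightarrow> merge_at c f u = merge_at c' f' u"
proof -
  have r: "restrict (merge_at c f) {1..n} = restrict (merge_at c' f') {1..n}"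
    and "card {u \<in> {1..n}. f u < c} = card {u \<in> {1..n}. f' u < c'}"
    using assms(1) unfolding merge_code_def c_def c'_def by (simp_all add: Let_def)
  then show "card {u \<in> {1..n}. f u < c} = card {u \<in> {1..n}. f' u < c'}"
    by simp
  show "merge_at c f u = merge_at c' f' u" if "u \<in> {1..n}" for u
    using fun_cong[OF r, of u] that by simp
qed

lemma merge_code_eq_least_redundant_boundary_eq:
  assumes "f \<in> redundant_colourings n m J" "f' \<in> redundant_colourings n m J"
    and "merge_code n m J f = merge_code n m J f'"
  shows "least_redundant_boundary n m J f = least_redundant_boundary n m J f'"
proof -
  have "\<not> least_redundant_boundary n m J f < least_redundant_boundary n m J f'"
    if f: "f \<in> redundant_colourings n m J" and f': "f' \<in> redundant_colourings n m J"
      and eq: "merge_code n m J f = merge_code n m J f'" for f f'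
  proof
    assume less: "least_redundant_boundary n m J f < least_redundant_boundary n m J f'"
    then have "\<not> redundant_boundary n f' J (least_redundant_boundary n m J f' - 1)"
      using least_redundant_boundary[OF f] least_redundant_boundary[OF f'] by auto
    then obtain u\<^sub>0 where "u\<^sub>0 \<in> {1..n}" "f' u\<^sub>0 = least_redundant_boundary n m J f' - 1"
      using not_redundant_boundary_attains least_redundant_boundary(1)[OF f'] by fastforce
    from merge_at_less_count[where f = f and f' = f', OF less this merge_code_eqD(2)[OF eq]]
    show False
      using merge_code_eqD(1)[OF eq] by simp
  qed
  then show ?thesis
    using assms by (metis linorder_neqE_nat)
qed

lemma inj_on_merge_code: "inj_on (merge_code n m J) (redundant_colourings n m J)"
proof (rule inj_onI)
  fix f f' assume f: "f \<in> redundant_colourings n m J" and f': "f' \<in> redundant_colourings n m J"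
    and eq: "merge_code n m J f = merge_code n m J f'"
  define c where "c = least_redundant_boundary n m J f"
  have c': "least_redundant_boundary n m J f' = c"
    using merge_code_eq_least_redundant_boundary_eq[OF f f' eq] unfolding c_def by simp
  have "1 \<le> c" "redundant_boundary n f J c" "redundant_boundary n f' J c"
    using least_redundant_boundary[OF f] least_redundant_boundary[OF f'] c' unfolding c_def by auto
  moreover have "merge_at c f u = merge_at c f' u" if "u \<in> {1..n}" for u
    using merge_code_eqD(2)[OF eq that] c' unfolding c_def by simp
  moreover have "card {u \<in> {1..n}. f u < c} = card {u \<in> {1..n}. f' u < c}"
    using merge_code_eqD(1)[OF eq] c' unfolding c_def by simp
  ultimately have pointwise: "f u = f' u" if "u \<in> {1..n}" for u
    using merge_at_redundant_eq[OF _ _ _ _ _ that] by blast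
  have "f \<in> {1..n} \<rightarrow>\<^sub>E {0..<m}" "f' \<in> {1..n} \<rightarrow>\<^sub>E {0..<m}"
    using f f' by (auto simp: redundant_colourings_def colourings_def)
  then show "f = f'"
    using pointwise by (rule PiE_ext)
qed

lemma merge_code_image:
  "merge_code n m J ` redundant_colourings n m J \<subseteq> {0..n} \<times> colourings n (m - 1)"
proof (rule image_subsetI)
  fix f assume f: "f \<in> redundant_colourings n m J"
  define c where "c = least_redundant_boundary n m J f"
  have "card {u \<in> {1..n}. f u < c} \<le> card {1..n}"
    by (intro card_mono) auto
  moreover have "merge_at c f u < m - 1" if "u \<in> {1..n}" for u
  proof -
    have "f u < m"
      using f that by (auto simp: redundant_colourings_def colourings_def PiE_iff)
    then show ?thesis
      using least_redundant_boundary(1)[OF f] unfolding c_def by (auto simp: merge_at_def)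
  qed
  ultimately show "merge_code n m J f \<in> {0..n} \<times> colourings n (m - 1)"
    by (auto simp: merge_code_def c_def[symmetric] colourings_def)
qed

lemma card_redundant_colourings: "card (redundant_colourings n m J) \<le> (n + 1) * (m - 1) ^ n"
proof -
  have "card (redundant_colourings n m J) \<le> card ({0..n} \<times> colourings n (m - 1))"
    using inj_on_merge_code merge_code_image by (rule card_inj_on_le) (simp add: finite_colourings)
  then show ?thesis
    by (simp add: card_cartesian_product card_colourings)
qed

lemma card_nonredundant_colourings_ge:
  "int m ^ n - int (n + 1) * int (m - 1) ^ n \<le> int (card (colourings n m - redundant_colourings n m J))"
proof -
  have "redundant_colourings n m J \<subseteq> colourings n m"
    by (auto simp: redundant_colourings_def)
  then have "card (colourings n m - redundant_colourings n m J) = m ^ n - card (redundant_colourings n m J)"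
    using finite_subset[OF _ finite_colourings] by (simp add: card_Diff_subset card_colourings)
  moreover have "card (redundant_colourings n m J) \<le> m ^ n"
    using card_mono[OF finite_colourings \<open>redundant_colourings n m J \<subseteq> colourings n m\<close>]
    by (simp add: card_colourings)
  moreover have "int (card (redundant_colourings n m J)) \<le> int (n + 1) * int (m - 1) ^ n"
    using card_redundant_colourings[of n m J]
    by (simp only: of_nat_mult[symmetric] of_nat_power[symmetric] of_nat_le_iff)
  ultimately show ?thesis
    by (simp add: of_nat_diff)
qed

lemma card_eulerian_pairs_le:
  assumes "r \<ge> 1"
  shows "card (eulerian_pairs n r k) \<le> ((k + r - 1) choose (r - 1)) * (k + r) ^ n"
proof -
  have "eulerian_pairs n r k \<subseteq> pair_of_colouring n ` (marker_sets (k + r) r \<times> colourings n (k + r))"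
  proof
    fix x assume "x \<in> eulerian_pairs n r k"
    then show "x \<in> pair_of_colouring n ` (marker_sets (k + r) r \<times> colourings n (k + r))"
      using colouring_of_pair_right_inverse[of "fst x" "snd x", OF _ assms] by (intro image_eqI) auto
  qed
  then have "card (eulerian_pairs n r k) \<le> card (marker_sets (k + r) r \<times> colourings n (k + r))"
    by (intro surj_card_le) (simp_all add: finite_marker_sets finite_colourings)
  then show ?thesis
    by (simp add: card_cartesian_product card_marker_sets card_colourings)
qed

lemma card_eulerian_pairs_ge:
  assumes "n \<ge> 1" "r \<ge> 1"
  shows "int ((k + r - 1) choose (r - 1)) * (int (k + r) ^ n - int (n + 1) * int (k + r - 1) ^ n)
           \<le> int (card (eulerian_pairs n r k))"
proof -
  define G where "G = (SIGMA J:marker_sets (k + r) r. colourings n (k + r) - redundant_colourings n (k + r) J)"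
  have "inj_on (pair_of_colouring n) G"
    by (rule inj_on_inverseI[where g = "colouring_of_pair n"])
      (auto simp: G_def colouring_of_pair_left_inverse(2)[OF assms])
  moreover have "pair_of_colouring n ` G \<subseteq> eulerian_pairs n r k"
    by (auto simp: G_def colouring_of_pair_left_inverse(1)[OF assms])
  ultimately have "card G \<le> card (eulerian_pairs n r k)"
    using finite_eulerian_pairs by (intro card_inj_on_le)
  have "int ((k + r - 1) choose (r - 1)) * (int (k + r) ^ n - int (n + 1) * int (k + r - 1) ^ n)
      = (\<Sum>J\<in>marker_sets (k + r) r. int (k + r) ^ n - int (n + 1) * int (k + r - 1) ^ n)"
    by (simp add: card_marker_sets)
  also have "\<dots> \<le> (\<Sum>J\<in>marker_sets (k + r) r.
      int (card (colourings n (k + r) - redundant_colourings n (k + r) J)))"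
    by (rule sum_mono) (rule card_nonredundant_colourings_ge)
  also have "\<dots> = int (card G)"
    unfolding G_def using finite_marker_sets finite_colourings by (simp add: card_SigmaI)
  also have "\<dots> \<le> int (card (eulerian_pairs n r k))"
    using \<open>card G \<le> card (eulerian_pairs n r k)\<close> by simp
  finally show ?thesis .
qed

theorem lemma2p7:
  fixes n r k :: nat
  assumes "n \<ge> 1" and "r \<ge> 1"
  shows "int ((k + r - 1) choose (r - 1)) * (int (k + r) ^ n - int (n + 1) * int (k + r - 1) ^ n)
           \<le> int (eulerian_r r n k)
       \<and> eulerian_r r n k \<le> ((k + r - 1) choose (r - 1)) * (k + r) ^ n"
  using card_eulerian_pairs_ge[OF assms, of k] card_eulerian_pairs_le[OF assms(2), of n k]
  by (simp add: eulerian_r_eq_card)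

end
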